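(* Let $p$ be a positive integer, $L,E,\sigma>0$ with $L,E\in 2^{-p}\mathbb{Z}$, and $\epsilon>0$ with $\sigma\ge\max\left(\frac{2}{\epsilon},2^{-p}\right)$. Then the truncated cumulative Laplace mechanism $\mathcal{M}^{(\mathtt{CLap})}_{L,E,\sigma,p}$ satisfies $d_\chi$-privacy with respect to the $\ell_1$ distance: for all $x,x'\in\mathcal{A}_{p,E}$ and all $z\in\mathcal{B}_{p,L+E}$, \[ f^{(\mathtt{CLap})}_{x,\sigma}(z)\le e^{\epsilon|x-x'|}f^{(\mathtt{CLap})}_{x',\sigma}(z). \]
   Context: For $p\in\mathbb{Z}_{>0}$ and $B>0$, $2^{-p}\mathbb{Z}=\{a/2^p: a\in\mathbb{Z}\}$, $\mathcal{A}_{p,B}:=[-B,B]\cap 2^{-p}\mathbb{Z}$ and $\mathcal{B}_{p,B}:=\mathcal{A}_{p,B}\setminus\{B\}$. The truncated cumulative Laplace mechanism $\mathcal{M}^{(\mathtt{CLap})}_{L,E,\sigma,p}$ with parameters $L,E,\sigma>0$ maps $x\in\mathcal{A}_{p,E}$ to $y\in\mathcal{B}_{p,L+E}$ with probability $f^{(\mathtt{CLap})}_{x,\sigma}(y)=\frac{1}{\lambda^{(\mathtt{CLap})}_{L,E,\sigma}}\int_y^{y+2^{-p}}e^{-\min(|r-x|,L)/\sigma}dr$, where $\lambda^{(\mathtt{CLap})}_{L,E,\sigma}=\sum_{y\in\mathcal{B}_{p,L+E}}\int_y^{y+2^{-p}}e^{-\min(|r-x|,L)/\sigma}dr$ is the normalizing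 constant (independent of $x$). *)

theory Defs
  imports "HOL-Analysis.Analysis"
begin

definition dyadic :: "nat \<Rightarrow> real set" where
  "dyadic p = {y. \<exists>a::int. y = of_int a / 2 ^ p}"

definition grid_A :: "nat \<Rightarrow> real \<Rightarrow> real set" where
  "grid_A p B = {-B..B} \<inter> dyadic p"

definition grid_B :: "nat \<Rightarrow> real \<Rightarrow> real set" where
  "grid_B p B = grid_A p B - {B}"

definition clap_mass :: "real \<Rightarrow> real \<Rightarrow> nat \<Rightarrow> real \<Rightarrow> real \<Rightarrow> real" where
  "clap_mass L \<sigma> p x y = integral {y..y + 1 / 2 ^ p} (\<lambda>r. exp (- min \<bar>r - x\<bar> L / \<sigma>))"

definition clap_lambda :: "real \<Rightarrow> real \<Rightarrow> real \<Rightarrow> nat \<Rightarrow> real \<Rightarrow> real" where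
  "clap_lambda L E \<sigma> p x = (\<Sum>y\<in>grid_B p (L + E). clap_mass L \<sigma> p x y)"

definition clap_prob :: "real \<Rightarrow> real \<Rightarrow> real \<Rightarrow> nat \<Rightarrow> real \<Rightarrow> real \<Rightarrow> real" where
  "clap_prob L E \<sigma> p x y = clap_mass L \<sigma> p x y / clap_lambda L E \<sigma> p x"

end

theory Submission
  imports Defs
begin

text \<open>Moving the input from \<open>x'\<close> to \<open>x\<close> changes the truncated distance \<open>min \<bar>r - x\<bar> L\<close>
  by at most \<open>\<bar>x - x'\<bar>\<close>, so each cell mass, and hence also the normalizing constant, changes
  by a factor of at most \<open>exp (\<bar>x - x'\<bar> / \<sigma>)\<close>. Bounding numerator and normalizer separately
  costs this factor twice, which is why \<open>\<sigma> \<ge> 2 / \<epsilon>\<close> suffices. The bound holds for all real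
  inputs and outputs.\<close>

lemma min_abs_diff_le_min_abs_diff_add:
  fixes r x x' L :: real
  shows "min \<bar>r - x'\<bar> L \<le> min \<bar>r - x\<bar> L + \<bar>x - x'\<bar>"
  using abs_triangle_ineq[of "r - x" "x - x'"] by (auto simp: min_def)

lemma clap_density_le:
  fixes r x x' L \<sigma> :: real
  assumes "\<sigma> > 0"
  shows "exp (- min \<bar>r - x\<bar> L / \<sigma>) \<le> exp (\<bar>x - x'\<bar> / \<sigma>) * exp (- min \<bar>r - x'\<bar> L / \<sigma>)"
proof -
  have "- min \<bar>r - x\<bar> L / \<sigma> \<le> \<bar>x - x'\<bar> / \<sigma> + - min \<bar>r - x'\<bar> L / \<sigma>"
    using min_abs_diff_le_min_abs_diff_add[of r x' L x] assms by (simp add: field_simps)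
  then show ?thesis
    by (simp add: exp_add[symmetric])
qed

lemma clap_density_integrable:
  "(\<lambda>r::real. exp (- min \<bar>r - x\<bar> L / \<sigma>)) integrable_on {a..b}"
  unfolding divide_inverse by (intro integrable_continuous_interval continuous_intros)

lemma clap_mass_nonneg: "0 \<le> clap_mass L \<sigma> p x y"
  unfolding clap_mass_def by (rule integral_nonneg[OF clap_density_integrable]) simp

lemma clap_mass_le:
  assumes "\<sigma> > 0"
  shows "clap_mass L \<sigma> p x y \<le> exp (\<bar>x - x'\<bar> / \<sigma>) * clap_mass L \<sigma> p x' y"
proof -
  let ?f = "\<lambda>x r. exp (- min \<bar>r - x\<bar> L / \<sigma>)" and ?I = "{y..y + 1 / 2 ^ p}"
  have "integral ?I (?f x) \<le> integral ?I (\<lambda>r. exp (\<bar>x - x'\<bar> / \<sigma>) * ?f x' r)"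
    by (intro integral_le clap_density_integrable integrable_on_mult_right clap_density_le assms)
  then show ?thesis
    unfolding clap_mass_def integral_mult[OF clap_density_integrable] .
qed

lemma clap_lambda_nonneg: "0 \<le> clap_lambda L E \<sigma> p x"
  unfolding clap_lambda_def by (intro sum_nonneg clap_mass_nonneg)

lemma clap_lambda_le:
  assumes "\<sigma> > 0"
  shows "clap_lambda L E \<sigma> p x \<le> exp (\<bar>x - x'\<bar> / \<sigma>) * clap_lambda L E \<sigma> p x'"
  unfolding clap_lambda_def sum_distrib_left by (intro sum_mono clap_mass_le assms)

text \<open>The case \<open>l = 0\<close> is covered because \<open>m / 0 = 0\<close> in Isabelle.\<close>

lemma divide_le_square_mult_divide:
  fixes m m' l l' K :: real
  assumes "K > 0" "0 \<le> m'" "0 \<le> l"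
    and "m \<le> K * m'" and "l \<le> K * l'" and "l' \<le> K * l"
  shows "m / l \<le> K\<^sup>2 * (m' / l')"
proof (cases "l = 0")
  case True
  with assms(1,5) have "0 \<le> l'"
    by (simp add: zero_le_mult_iff)
  with True assms(6) show ?thesis by simp
next
  case False
  with assms(3) have "l > 0"
    by simp
  with assms(5) have "0 < K * l'"
    by linarith
  with assms(1) have "l' > 0"
    by (simp add: zero_less_mult_iff)
  have "m / l \<le> K * m' / l"
    using assms(4) \<open>l > 0\<close> by (rule divide_right_mono[OF _ less_imp_le])
  also have "\<dots> = K * m' * K / (K * l)"
    using assms(1) by simp
  also have "\<dots> \<le> K * m' * K / l'"
    using assms \<open>l' > 0\<close> by (intro divide_left_mono) auto
  finally show ?thesis
    by (simp add: power2_eq_square field_simps)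
qed

lemma clap_prob_nonneg: "0 \<le> clap_prob L E \<sigma> p x y"
  unfolding clap_prob_def by (intro divide_nonneg_nonneg clap_mass_nonneg clap_lambda_nonneg)

lemma clap_prob_le:
  assumes "\<sigma> > 0"
  shows "clap_prob L E \<sigma> p x z \<le> exp (2 * \<bar>x - x'\<bar> / \<sigma>) * clap_prob L E \<sigma> p x' z"
proof -
  have "clap_prob L E \<sigma> p x z \<le> (exp (\<bar>x - x'\<bar> / \<sigma>))\<^sup>2 * clap_prob L E \<sigma> p x' z"
    unfolding clap_prob_def
    using clap_lambda_le[OF assms, of L E p x' x]
    by (intro divide_le_square_mult_divide clap_mass_nonneg clap_lambda_nonneg
        clap_mass_le clap_lambda_le assms) (simp_all add: abs_minus_commute)
  then show ?thesis
    by (simp add: power2_eq_square exp_add[symmetric])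
qed

theorem mainTheorem10:
  fixes p :: nat and L E \<sigma> \<epsilon> :: real
  assumes "p > 0" and "L > 0" and "E > 0" and "\<sigma> > 0"
    and "L \<in> dyadic p" and "E \<in> dyadic p"
    and "\<epsilon> > 0" and "\<sigma> \<ge> max (2 / \<epsilon>) (1 / 2 ^ p)"
  shows "\<forall>x \<in> grid_A p E. \<forall>x' \<in> grid_A p E. \<forall>z \<in> grid_B p (L + E).
           clap_prob L E \<sigma> p x z \<le> exp (\<epsilon> * \<bar>x - x'\<bar>) * clap_prob L E \<sigma> p x' z"
proof (intro ballI)
  fix x x' z
  have "2 / \<sigma> \<le> \<epsilon>"
    using assms(4,7,8) by (simp add: field_simps)
  from mult_right_mono[OF this abs_ge_zero[of "x - x'"]]
  have "exp (2 * \<bar>x - x'\<bar> / \<sigma>) \<le> exp (\<epsilon> * \<bar>x - x'\<bar>)"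
    by simp
  from mult_right_mono[OF this clap_prob_nonneg] clap_prob_le[OF assms(4)]
  show "clap_prob L E \<sigma> p x z \<le> exp (\<epsilon> * \<bar>x - x'\<bar>) * clap_prob L E \<sigma> p x' z"
    by (rule order_trans[rotated])
qed

end
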